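(* Let $n\ge 2$ and $q=e^{2\pi i/6}$. For each $i$, conjugation by $s_i$ maps the set $\{\pm w\}$ of signed basis words of $Q_n$ to itself, i.e. $x\mapsto s_i^{-1}xs_i$ acts on the basis $\{u_1^{\epsilon_1}\cdots u_{n-1}^{\epsilon_{n-1}}v_1^{\nu_1}\cdots v_{n-1}^{\nu_{n-1}}\}$ of $Q_n$ by a signed permutation. Consequently, the image of the group $G_n=\langle s_1,\dots,s_{n-1}\rangle$ in the automorphism group of $Q_n$ under the conjugation action is finite, and the kernel of this action is contained in $Z(Q_n)$.
   Context: $Q_n$ is the $\mathbb{C}$-algebra with generators $u_1,v_1,\dots,u_{n-1},v_{n-1}$ and relations (G1) $u_i^2=v_i^2=-1$; (G2) $[u_i,v_j]=-1$ if $|i-j|\le1$; (G3) $[u_i,v_j]=1$ if $|i-j|\ge2$; (G4) $[u_i,u_j]=[v_i,v_j]=1$, with $[a,b]=aba^{-1}b^{-1}$. The words $u_1^{\epsilon_1}\cdots u_{n-1}^{\epsilon_{n-1}}v_1^{\nu_1}\cdots v_{n-1}^{\nu_{n-1}}$ ($\epsilon_i,\nu_i\in\{0,1\}$) form a basis of $Q_n$. $s_i=\frac{-1}{2q}(1+u_i+v_i+u_iv_i)$ for $1\le i\le n-1$ (these are invertible). *)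

theory Defs
  imports Complex_Main
begin

text \<open>Two-sided inverse in a ring (used only for invertible elements).\<close>
definition ring_inv :: "'a::ring_1 \<Rightarrow> 'a" where
  "ring_inv a = (THE b. b * a = 1 \<and> a * b = 1)"

definition comm :: "'a::ring_1 \<Rightarrow> 'a \<Rightarrow> 'a" where
  "comm a b = a * b * ring_inv a * ring_inv b"

text \<open>A complex algebra structure on a ring: a central unital ring homomorphism from C.\<close>
definition calg :: "(complex \<Rightarrow> 'a::ring_1) \<Rightarrow> bool" where
  "calg sc \<longleftrightarrow> sc 1 = 1 \<and> (\<forall>a b. sc (a + b) = sc a + sc b) \<and> (\<forall>a b. sc (a * b) = sc a * sc b)
     \<and> (\<forall>a x. sc a * x = x * sc a)"

text \<open>Basis word u_1^{e_1}...u_{n-1}^{e_{n-1}} v_1^{f_1}...v_{n-1}^{f_{n-1}}, with S = {i. e_i = 1},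
  T = {i. f_i = 1}, subsets of {1..n-1}; products are ordered by increasing index.\<close>
definition word :: "nat \<Rightarrow> (nat \<Rightarrow> 'a::ring_1) \<Rightarrow> (nat \<Rightarrow> 'a) \<Rightarrow> nat set \<Rightarrow> nat set \<Rightarrow> 'a" where
  "word n u v S T = prod_list (map (\<lambda>i. if i \<in> S then u i else 1) [1..<n])
                  * prod_list (map (\<lambda>i. if i \<in> T then v i else 1) [1..<n])"

definition word_idx :: "nat \<Rightarrow> (nat set \<times> nat set) set" where
  "word_idx n = Pow {1..<n} \<times> Pow {1..<n}"

definition words_basis :: "nat \<Rightarrow> (complex \<Rightarrow> 'a::ring_1) \<Rightarrow> (nat \<Rightarrow> 'a) \<Rightarrow> (nat \<Rightarrow> 'a) \<Rightarrow> bool" where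
  "words_basis n sc u v \<longleftrightarrow>
     (\<forall>x. \<exists>c. x = (\<Sum>(S,T)\<in>word_idx n. sc (c (S,T)) * word n u v S T)) \<and>
     (\<forall>c. (\<Sum>(S,T)\<in>word_idx n. sc (c (S,T)) * word n u v S T) = 0 \<longrightarrow>
          (\<forall>p\<in>word_idx n. c p = 0))"

definition Q_rels :: "nat \<Rightarrow> (nat \<Rightarrow> 'a::ring_1) \<Rightarrow> (nat \<Rightarrow> 'a) \<Rightarrow> bool" where
  "Q_rels n u v \<longleftrightarrow>
     (\<forall>i\<in>{1..<n}. u i * u i = -1 \<and> v i * v i = -1) \<and>
     (\<forall>i\<in>{1..<n}. \<forall>j\<in>{1..<n}. i \<le> j + 1 \<and> j \<le> i + 1 \<longrightarrow> comm (u i) (v j) = -1) \<and>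
     (\<forall>i\<in>{1..<n}. \<forall>j\<in>{1..<n}. (i \<ge> j + 2 \<or> j \<ge> i + 2) \<longrightarrow> comm (u i) (v j) = 1) \<and>
     (\<forall>i\<in>{1..<n}. \<forall>j\<in>{1..<n}. comm (u i) (u j) = 1 \<and> comm (v i) (v j) = 1)"

definition is_Q :: "nat \<Rightarrow> (complex \<Rightarrow> 'a::ring_1) \<Rightarrow> (nat \<Rightarrow> 'a) \<Rightarrow> (nat \<Rightarrow> 'a) \<Rightarrow> bool" where
  "is_Q n sc u v \<longleftrightarrow> calg sc \<and> Q_rels n u v \<and> words_basis n sc u v"

definition qq :: complex where "qq = exp (2 * of_real pi * \<i> / 6)"

definition sgen :: "(complex \<Rightarrow> 'a::ring_1) \<Rightarrow> (nat \<Rightarrow> 'a) \<Rightarrow> (nat \<Rightarrow> 'a) \<Rightarrow> nat \<Rightarrow> 'a" where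
  "sgen sc u v i = sc (- 1 / (2 * qq)) * (1 + u i + v i + u i * v i)"

definition signed_words :: "nat \<Rightarrow> (nat \<Rightarrow> 'a::ring_1) \<Rightarrow> (nat \<Rightarrow> 'a) \<Rightarrow> 'a set" where
  "signed_words n u v = {w. \<exists>(S,T)\<in>word_idx n. w = word n u v S T \<or> w = - word n u v S T}"

inductive_set Ggrp :: "nat \<Rightarrow> (nat \<Rightarrow> 'a::ring_1) \<Rightarrow> 'a set" for n s where
  one: "1 \<in> Ggrp n s"
| mul: "g \<in> Ggrp n s \<Longrightarrow> i \<in> {1..<n} \<Longrightarrow> g * s i \<in> Ggrp n s"
| mulinv: "g \<in> Ggrp n s \<Longrightarrow> i \<in> {1..<n} \<Longrightarrow> g * ring_inv (s i) \<in> Ggrp n s"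

definition conj_act :: "'a::ring_1 \<Rightarrow> 'a \<Rightarrow> 'a" where
  "conj_act g x = ring_inv g * x * g"

end

theory Submission
  imports Defs "HOL-Library.FuncSet"
begin

(* Since u_i and
   v_i square to -1 and anticommute, the quaternion identity
   (1 + u + v + uv)(1 - u - v - uv) = 4 shows that s_i is a unit.  Every generator x of
   Q_n commutes or anticommutes with u_i and with v_i, and never anticommutes with both;
   in each case x (1 + u_i + v_i + u_i v_i) = (1 + u_i + v_i + u_i v_i) y for a signed
   word y, so s_i^-1 x s_i is a signed word.  The signed words form a finite monoid, and
   conjugation is multiplicative, so conjugation by s_i maps signed words to signed
   words; being injective on a finite set it permutes them.  By induction over the
   generation of G_n, every g in G_n is a unit whose conjugation preserves the signed
   words.  As the words span Q_n and conjugation is linear, conj_act g is determined by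
   its restriction to the finite set of signed words, which gives finiteness; an element
   acting trivially by conjugation is central. *)

definition ring_unit :: "'a::ring_1 \<Rightarrow> bool" where
  "ring_unit a \<longleftrightarrow> (\<exists>b. b * a = 1 \<and> a * b = 1)"

(* A two-sided inverse is unique, so it is the one chosen by ring_inv. *)
lemma ring_inv_eqI:
  fixes a b :: "'a::ring_1"
  assumes "b * a = 1" "a * b = 1"
  shows "ring_inv a = b"
  unfolding ring_inv_def
proof (rule the_equality)
  show "b * a = 1 \<and> a * b = 1" using assms by simp
next
  fix b' assume b': "b' * a = 1 \<and> a * b' = 1"
  have "b' = b' * (a * b)" using assms by simp
  also have "\<dots> = (b' * a) * b" by (simp add: mult.assoc)
  finally show "b' = b" using b' by simp
qed

lemma ring_unitI: "b * a = 1 \<Longrightarrow> a * b = 1 \<Longrightarrow> ring_unit a"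
  unfolding ring_unit_def by blast

lemma ring_unit_ring_inv:
  assumes "ring_unit a"
  shows "ring_inv a * a = 1" "a * ring_inv a = 1"
  using assms ring_inv_eqI unfolding ring_unit_def by blast+

lemma ring_unit_one: "ring_unit (1::'a::ring_1)"
  by (rule ring_unitI[of 1]) simp_all

lemma ring_unit_inv:
  assumes "ring_unit a"
  shows "ring_unit (ring_inv a)" "ring_inv (ring_inv a) = a"
  using ring_unit_ring_inv[OF assms] by (auto intro: ring_unitI ring_inv_eqI)

lemma ring_unit_mult:
  fixes a b :: "'a::ring_1"
  assumes a: "ring_unit a" and b: "ring_unit b"
  shows "ring_unit (a * b)" "ring_inv (a * b) = ring_inv b * ring_inv a"
proof -
  note ia = ring_unit_ring_inv[OF a] and ib = ring_unit_ring_inv[OF b]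
  have l: "(ring_inv b * ring_inv a) * (a * b) = 1"
    by (simp add: mult.assoc) (simp add: mult.assoc[symmetric] ia ib)
  have r: "(a * b) * (ring_inv b * ring_inv a) = 1"
    by (simp add: mult.assoc) (simp add: mult.assoc[symmetric] ia ib)
  show "ring_unit (a * b)" using l r by (rule ring_unitI)
  show "ring_inv (a * b) = ring_inv b * ring_inv a" using l r by (rule ring_inv_eqI)
qed

lemma conj_act_mult:
  assumes "ring_unit g" "ring_unit h"
  shows "conj_act (g * h) x = conj_act h (conj_act g x)"
  unfolding conj_act_def ring_unit_mult(2)[OF assms] by (simp add: mult.assoc)

lemma conj_act_inv_cancel:
  assumes "ring_unit g"
  shows "conj_act (ring_inv g) (conj_act g x) = x"
  using ring_unit_ring_inv[OF assms] unfolding conj_act_def ring_unit_inv(2)[OF assms]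
  by (simp add: mult.assoc) (simp add: mult.assoc[symmetric])

lemma conj_act_prod_list:
  assumes "ring_unit g"
  shows "conj_act g (prod_list xs) = prod_list (map (conj_act g) xs)"
proof (induction xs)
  case Nil
  show ?case using ring_unit_ring_inv[OF assms] by (simp add: conj_act_def)
next
  case (Cons x xs)
  have "conj_act g (x * y) = conj_act g x * conj_act g y" for y
    using ring_unit_ring_inv[OF assms] unfolding conj_act_def
    by (simp add: mult.assoc) (simp add: mult.assoc[symmetric])
  then show ?case using Cons by simp
qed

lemma conj_act_eqI:
  assumes "ring_unit g" "x * g = g * y"
  shows "conj_act g x = y"
  using assms ring_unit_ring_inv[OF assms(1)] unfolding conj_act_def
  by (metis mult.assoc mult_1_left)

lemma conj_act_sum: "conj_act g (sum f A) = (\<Sum>p\<in>A. conj_act g (f p))"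
  unfolding conj_act_def by (simp add: sum_distrib_left sum_distrib_right)

lemma conj_act_kernel_central:
  assumes "ring_unit g" "conj_act g = id"
  shows "g * x = x * g"
proof -
  have "ring_inv g * x * g = x" using fun_cong[OF assms(2), of x] by (simp add: conj_act_def)
  then have "g * (ring_inv g * x * g) = g * x" by simp
  then show ?thesis using ring_unit_ring_inv[OF assms(1)] by (simp add: mult.assoc[symmetric])
qed

lemma square_minus_one_inv:
  fixes a :: "'a::ring_1"
  assumes "a * a = -1"
  shows "ring_inv a = -a"
  by (rule ring_inv_eqI) (simp_all add: assms)

(* For a, b squaring to -1 the commutator measures how b a differs from a b;
   so comm a b = 1 means commuting and comm a b = -1 means anticommuting. *)
lemma comm_square_minus_one:
  fixes a b :: "'a::ring_1"
  assumes a: "a * a = -1" and b: "b * b = -1"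
  shows "b * a = a * comm a b * b"
proof -
  have cancel: "b * (b * y) = -y" "a * (a * y) = -y" for y
    using a b by (metis mult.assoc mult_minus1)+
  show ?thesis unfolding comm_def square_minus_one_inv[OF a] square_minus_one_inv[OF b]
    by (simp add: mult.assoc cancel b)
qed

definition sign_commute :: "'a::ring_1 \<Rightarrow> 'a \<Rightarrow> bool" where
  "sign_commute x y \<longleftrightarrow> x * y = y * x \<or> x * y = - (y * x)"

lemma quat_inverse:
  fixes u v :: "'a::ring_1"
  assumes uu: "u * u = -1" and vv: "v * v = -1" and vu: "v * u = - (u * v)"
  shows "(1 + u + v + u * v) * (1 - u - v - u * v) = 4"
    and "(1 - u - v - u * v) * (1 + u + v + u * v) = 4"
proof -
  have r: "v * (v * y) = -y" "u * (u * y) = -y" "v * (u * y) = - (u * (v * y))" for y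
    using vv uu vu by (metis mult.assoc mult_minus_left mult_1 mult_minus1)+
  show "(1 + u + v + u * v) * (1 - u - v - u * v) = 4"
    by (simp add: algebra_simps r vv uu vu)
  show "(1 - u - v - u * v) * (1 + u + v + u * v) = 4"
    by (simp add: algebra_simps r vv uu vu)
qed

(* How an element x commuting or anticommuting with u and v passes through
   1 + u + v + uv: the three cases in which x does not anticommute with both. *)
lemma quat_commute_both:
  fixes u v x :: "'a::ring_1"
  assumes xu: "x * u = u * x" and xv: "x * v = v * x"
  shows "x * (1 + u + v + u * v) = (1 + u + v + u * v) * x"
proof -
  have "x * (u * v) = u * v * x" by (metis xu xv mult.assoc)
  then show ?thesis by (simp add: algebra_simps xu xv)
qed

lemma quat_anticommute_v:
  fixes u v x :: "'a::ring_1"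
  assumes vv: "v * v = -1" and xu: "x * u = u * x" and xv: "x * v = - (v * x)"
  shows "x * (1 + u + v + u * v) = (1 + u + v + u * v) * (- (v * x))"
proof -
  have r: "x * (u * y) = u * (x * y)" "x * (v * y) = - (v * (x * y))" "v * (v * y) = -y" for y
    using xu xv vv by (metis mult.assoc mult_minus_left mult_1 mult_minus1)+
  show ?thesis by (simp add: algebra_simps r xu xv vv)
qed

lemma quat_anticommute_u:
  fixes u v x :: "'a::ring_1"
  assumes uu: "u * u = -1" and vv: "v * v = -1" and vu: "v * u = - (u * v)"
    and xu: "x * u = - (u * x)" and xv: "x * v = v * x"
  shows "x * (1 + u + v + u * v) = (1 + u + v + u * v) * (- (u * (v * x)))"
proof -
  have r: "x * (u * y) = - (u * (x * y))" "x * (v * y) = v * (x * y)" "v * (v * y) = -y"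
    "u * (u * y) = -y" "v * (u * y) = - (u * (v * y))" for y
    using xu xv vv uu vu by (metis mult.assoc mult_minus_left mult_1 mult_minus1)+
  show ?thesis by (simp add: algebra_simps r xu xv vv uu vu)
qed

definition sel_prod :: "(nat \<Rightarrow> 'a::ring_1) \<Rightarrow> nat set \<Rightarrow> nat list \<Rightarrow> 'a" where
  "sel_prod f S xs = prod_list (map (\<lambda>i. if i \<in> S then f i else 1) xs)"

lemma sel_prod_simps [simp]:
  "sel_prod f S [] = 1"
  "sel_prod f S (k # ks) = (if k \<in> S then f k else 1) * sel_prod f S ks"
  by (simp_all add: sel_prod_def)

lemma sel_prod_cong: "(\<And>i. i \<in> set xs \<Longrightarrow> i \<in> S \<longleftrightarrow> i \<in> S') \<Longrightarrow> sel_prod f S xs = sel_prod f S' xs"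
  by (induction xs) auto

lemma sel_prod_empty: "sel_prod f {} xs = 1"
  by (induction xs) auto

lemma sel_prod_toggle:
  fixes f :: "nat \<Rightarrow> 'a::ring_1"
  assumes "distinct xs" "j \<in> set xs"
    and commute: "\<And>k. k \<in> set xs \<Longrightarrow> f j * f k = f k * f j" and square: "f j * f j = -1"
  shows "f j * sel_prod f S xs =
    (if j \<in> S then - sel_prod f (S - {j}) xs else sel_prod f (insert j S) xs)"
  using assms(1,2) commute
proof (induction xs)
  case Nil
  then show ?case by simp
next
  case (Cons k ks)
  show ?case
  proof (cases "k = j")
    case True
    then have "j \<notin> set ks" using Cons.prems by auto
    then have "sel_prod f (S - {j}) ks = sel_prod f S ks" "sel_prod f (insert j S) ks = sel_prod f S ks"
      by (auto intro: sel_prod_cong)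
    then show ?thesis using True square by (simp add: mult.assoc[symmetric])
  next
    case False
    then have IH: "f j * sel_prod f S ks =
        (if j \<in> S then - sel_prod f (S - {j}) ks else sel_prod f (insert j S) ks)"
      using Cons by auto
    have swap: "f j * (if k \<in> S then f k else 1) = (if k \<in> S then f k else 1) * f j"
      using Cons.prems(3)[of k] by auto
    have "f j * sel_prod f S (k # ks) = (if k \<in> S then f k else 1) * (f j * sel_prod f S ks)"
      by (simp only: sel_prod_simps mult.assoc[symmetric] swap)
    then show ?thesis using IH False by auto
  qed
qed

lemma sel_prod_sign_commute:
  assumes "\<And>k. k \<in> set xs \<Longrightarrow> sign_commute x (f k)"
  shows "sign_commute x (sel_prod f S xs)"
  using assms
proof (induction xs)
  case Nil
  then show ?case by (simp add: sign_commute_def)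
next
  case (Cons k ks)
  define g where "g = (if k \<in> S then f k else 1)"
  have "sign_commute x g" using Cons.prems[of k] by (auto simp: g_def sign_commute_def)
  moreover have "sign_commute x (sel_prod f S ks)" using Cons by auto
  ultimately show ?case unfolding sign_commute_def sel_prod_simps g_def[symmetric]
    by (elim disjE) (simp_all add: mult.assoc[symmetric], simp_all add: mult.assoc)
qed

locale Q_algebra =
  fixes n :: nat and sc :: "complex \<Rightarrow> 'a::ring_1" and u v :: "nat \<Rightarrow> 'a"
  assumes calg: "calg sc" and rels: "Q_rels n u v"
begin

abbreviation idx :: "nat set" where "idx \<equiv> {1..<n}"
abbreviation M :: "'a set" where "M \<equiv> signed_words n u v"
abbreviation s :: "nat \<Rightarrow> 'a" where "s \<equiv> sgen sc u v"

lemma u_square: "i \<in> idx \<Longrightarrow> u i * u i = -1"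
  and v_square: "i \<in> idx \<Longrightarrow> v i * v i = -1"
  using rels unfolding Q_rels_def by auto

lemma u_commute: "i \<in> idx \<Longrightarrow> j \<in> idx \<Longrightarrow> u j * u i = u i * u j"
  and v_commute: "i \<in> idx \<Longrightarrow> j \<in> idx \<Longrightarrow> v j * v i = v i * v j"
  using rels u_square v_square comm_square_minus_one unfolding Q_rels_def by (metis mult_1_right)+

lemma vu_anticommute:
  assumes "i \<in> idx" "j \<in> idx" "i \<le> j + 1" "j \<le> i + 1"
  shows "v j * u i = - (u i * v j)"
  using assms rels u_square v_square comm_square_minus_one unfolding Q_rels_def
  by (metis mult_minus1_right mult_minus_left)

lemma vu_commute_far:
  assumes "i \<in> idx" "j \<in> idx" "\<not> (i \<le> j + 1 \<and> j \<le> i + 1)"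
  shows "v j * u i = u i * v j"
proof -
  have "i \<ge> j + 2 \<or> j \<ge> i + 2" using assms(3) by auto
  then have "comm (u i) (v j) = 1" using rels assms(1,2) unfolding Q_rels_def by blast
  then show ?thesis using comm_square_minus_one u_square v_square assms(1,2) by (metis mult_1_right)
qed

lemma vu_sign_commute: "i \<in> idx \<Longrightarrow> j \<in> idx \<Longrightarrow> sign_commute (v j) (u i)"
  unfolding sign_commute_def using vu_commute_far vu_anticommute by blast

lemma word_sel_prod: "word n u v S T = sel_prod u S [1..<n] * sel_prod v T [1..<n]"
  by (simp add: word_def sel_prod_def)

lemma signed_words_iff:
  "m \<in> M \<longleftrightarrow> (\<exists>S T. S \<subseteq> idx \<and> T \<subseteq> idx \<and> (m = word n u v S T \<or> m = - word n u v S T))"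
  unfolding signed_words_def word_idx_def by auto

lemma word_in: "S \<subseteq> idx \<Longrightarrow> T \<subseteq> idx \<Longrightarrow> word n u v S T \<in> M"
  by (auto simp: signed_words_iff)

lemma neg_in_iff [simp]: "- m \<in> M \<longleftrightarrow> m \<in> M"
  unfolding signed_words_iff by (metis minus_minus)

lemma one_in: "1 \<in> M"
  using word_in[of "{}" "{}"] by (simp add: word_sel_prod sel_prod_empty)

lemma finite_signed_words: "finite M"
proof -
  have "M \<subseteq> (\<lambda>(S, T). word n u v S T) ` word_idx n \<union> (\<lambda>(S, T). - word n u v S T) ` word_idx n"
    unfolding signed_words_def by auto
  moreover have "finite (word_idx n)" by (simp add: word_idx_def)
  ultimately show ?thesis by (meson finite_UnI finite_imageI finite_subset)
qed

(* Left multiplication by a generator sends a word to a signed word: u_j toggles j in S,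
   while v_j first passes the u-part (up to sign) and then toggles j in T. *)
lemma generator_times_word:
  assumes j: "j \<in> idx" and S: "S \<subseteq> idx" and T: "T \<subseteq> idx"
  shows "u j * word n u v S T \<in> M" "v j * word n u v S T \<in> M"
proof -
  have d: "distinct [1..<n]" "j \<in> set [1..<n]" using j by auto
  have u_toggle: "u j * sel_prod u S [1..<n] =
      (if j \<in> S then - sel_prod u (S - {j}) [1..<n] else sel_prod u (insert j S) [1..<n])"
    by (rule sel_prod_toggle[OF d]) (use u_commute u_square j in auto)
  have v_toggle: "v j * sel_prod v T [1..<n] =
      (if j \<in> T then - sel_prod v (T - {j}) [1..<n] else sel_prod v (insert j T) [1..<n])"
    by (rule sel_prod_toggle[OF d]) (use v_commute v_square j in auto)
  have S': "S - {j} \<subseteq> idx" "insert j S \<subseteq> idx" and T': "T - {j} \<subseteq> idx" "insert j T \<subseteq> idx"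
    using S T j by auto
  have "u j * word n u v S T = (u j * sel_prod u S [1..<n]) * sel_prod v T [1..<n]"
    by (simp add: word_sel_prod mult.assoc)
  then show "u j * word n u v S T \<in> M"
    unfolding u_toggle using word_in[OF S'(1) T] word_in[OF S'(2) T]
    by (auto simp: word_sel_prod)
  have "sign_commute (v j) (sel_prod u S [1..<n])"
    by (rule sel_prod_sign_commute) (use vu_sign_commute j in auto)
  then have "v j * word n u v S T = sel_prod u S [1..<n] * (v j * sel_prod v T [1..<n])
      \<or> v j * word n u v S T = - (sel_prod u S [1..<n] * (v j * sel_prod v T [1..<n]))"
    unfolding sign_commute_def word_sel_prod by (auto simp: mult.assoc[symmetric])
  moreover have "sel_prod u S [1..<n] * (v j * sel_prod v T [1..<n]) \<in> M"
    unfolding v_toggle using word_in[OF S T'(1)] word_in[OF S T'(2)]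
    by (auto simp: word_sel_prod mult.assoc)
  ultimately show "v j * word n u v S T \<in> M" by auto
qed

lemma generator_times:
  assumes "j \<in> idx" "m \<in> M"
  shows "u j * m \<in> M" "v j * m \<in> M"
proof -
  obtain S T where "S \<subseteq> idx" "T \<subseteq> idx" "m = word n u v S T \<or> m = - word n u v S T"
    using assms(2) unfolding signed_words_iff by blast
  then show "u j * m \<in> M" "v j * m \<in> M"
    using generator_times_word[OF assms(1)] by auto
qed

lemma generator_in: "j \<in> idx \<Longrightarrow> u j \<in> M" "j \<in> idx \<Longrightarrow> v j \<in> M"
  using generator_times[OF _ one_in] by auto

definition factors :: "nat set \<Rightarrow> nat set \<Rightarrow> 'a list" where
  "factors S T = map (\<lambda>i. if i \<in> S then u i else 1) [1..<n] @ map (\<lambda>i. if i \<in> T then v i else 1) [1..<n]"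

lemma word_factors: "word n u v S T = prod_list (factors S T)"
  by (simp add: word_def factors_def)

lemma factors_cases:
  assumes "y \<in> set (factors S T)"
  obtains "y = 1" | k where "k \<in> idx" "y = u k" | k where "k \<in> idx" "y = v k"
  using assms unfolding factors_def by (auto split: if_splits)

lemma mult_closed:
  assumes a: "a \<in> M" and b: "b \<in> M"
  shows "a * b \<in> M"
proof -
  have "prod_list ys * b \<in> M" if "\<And>y. y \<in> set ys \<Longrightarrow> \<forall>m\<in>M. y * m \<in> M" for ys
    using that by (induction ys) (auto simp: b mult.assoc)
  then have "word n u v S T * b \<in> M" for S T
    unfolding word_factors by (metis factors_cases generator_times mult_1_left)
  moreover obtain S T where "S \<subseteq> idx" "T \<subseteq> idx" "a = word n u v S T \<or> a = - word n u v S T"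
    using a unfolding signed_words_iff by blast
  ultimately show ?thesis by auto
qed

lemma prod_list_closed: "set ys \<subseteq> M \<Longrightarrow> prod_list ys \<in> M"
  by (induction ys) (auto simp: one_in mult_closed)

lemma sc_central: "sc c * x = x * sc c"
  and sc_mult: "sc (c * d) = sc c * sc d"
  and sc_add: "sc (c + d) = sc c + sc d"
  and sc_one: "sc 1 = 1"
  using calg unfolding calg_def by blast+

lemma sc_pull: "x * (sc c * y) = sc c * (x * y)"
  by (metis mult.assoc sc_central)

lemma sc_times_sc: "(sc c * x) * (sc d * y) = sc (c * d) * (x * y)"
  by (simp only: mult.assoc sc_pull[of x] sc_mult)

lemma sc_numeral_four: "sc 4 = 4"
proof -
  have "(4::complex) = 1 + 1 + 1 + 1" by simp
  then show ?thesis by (simp only: sc_add sc_one) simp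
qed

(* s_i = c (1 + u_i + v_i + u_i v_i) with c = -1/(2q) is a unit, with inverse
   (1/(4c)) (1 - u_i - v_i - u_i v_i) by the quaternion identity. *)
lemma s_unit:
  assumes i: "i \<in> idx"
  shows "ring_unit (s i)"
proof -
  define a b where "a = 1 + u i + v i + u i * v i" and "b = 1 - u i - v i - u i * v i"
  define c where "c = - 1 / (2 * qq)"
  have s: "s i = sc c * a" by (simp add: sgen_def a_def c_def)
  have "c \<noteq> 0" by (simp add: c_def qq_def)
  then have c_inv: "c * (1 / (4 * c)) = 1 / 4" "(1 / (4 * c)) * c = 1 / 4"
    by simp_all
  have quarter: "sc (1 / 4) * 4 = 1"
    unfolding sc_numeral_four[symmetric] sc_mult[symmetric] by (simp add: sc_one)
  have "v i * u i = - (u i * v i)" using vu_anticommute[OF i i] by simp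
  note quat = quat_inverse[OF u_square[OF i] v_square[OF i] this, folded a_def b_def]
  show ?thesis
  proof (rule ring_unitI[of "sc (1 / (4 * c)) * b"])
    show "sc (1 / (4 * c)) * b * s i = 1" "s i * (sc (1 / (4 * c)) * b) = 1"
      unfolding s sc_times_sc c_inv quat quarter by (rule refl)+
  qed
qed

(* Each generator x intertwines 1 + u_i + v_i + u_i v_i with a signed word: u_k always
   commutes with u_i and v_k with v_i, so at most one of u_i, v_i anticommutes with x. *)
lemma generator_intertwines:
  assumes i: "i \<in> idx" and k: "k \<in> idx" and x: "x = u k \<or> x = v k"
  shows "\<exists>y\<in>M. x * (1 + u i + v i + u i * v i) = (1 + u i + v i + u i * v i) * y"
proof -
  have vu: "v i * u i = - (u i * v i)" using vu_anticommute[OF i i] by simp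
  have xM: "x \<in> M" using x generator_in k by auto
  from x show ?thesis
  proof
    assume xu: "x = u k"
    have "x * u i = u i * x" using u_commute[OF i k] xu by simp
    moreover have "x * v i = v i * x \<or> x * v i = - (v i * x)"
      using vu_sign_commute[OF k i] xu unfolding sign_commute_def by auto
    ultimately show ?thesis
      using quat_commute_both quat_anticommute_v[OF v_square[OF i]] xM
        generator_times(2)[OF i xM] by fastforce
  next
    assume xv: "x = v k"
    have "x * v i = v i * x" using v_commute[OF i k] xv by simp
    moreover have "x * u i = u i * x \<or> x * u i = - (u i * x)"
      using vu_sign_commute[OF i k] xv unfolding sign_commute_def by auto
    ultimately show ?thesis
      using quat_commute_both quat_anticommute_u[OF u_square[OF i] v_square[OF i] vu] xM
        generator_times[OF i generator_times(2)[OF i xM]] by fastforce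
  qed
qed

lemma conj_generator_in:
  assumes i: "i \<in> idx" and k: "k \<in> idx" and x: "x = u k \<or> x = v k"
  shows "conj_act (s i) x \<in> M"
proof -
  obtain y where "y \<in> M" and y: "x * (1 + u i + v i + u i * v i) = (1 + u i + v i + u i * v i) * y"
    using generator_intertwines[OF assms] by blast
  moreover have "x * s i = s i * y"
    unfolding sgen_def by (simp only: sc_pull[of x] y mult.assoc)
  ultimately show ?thesis using conj_act_eqI[OF s_unit[OF i]] by simp
qed

(* Conjugation by s_i is multiplicative, so it maps each word (a product of generators)
   into the monoid of signed words; being injective on a finite set, it permutes them. *)
lemma conj_s_into: "i \<in> idx \<Longrightarrow> m \<in> M \<Longrightarrow> conj_act (s i) m \<in> M"
proof -
  assume i: "i \<in> idx" and m: "m \<in> M"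
  have one: "conj_act (s i) 1 = 1"
    using ring_unit_ring_inv[OF s_unit[OF i]] by (simp add: conj_act_def)
  have words: "conj_act (s i) (word n u v S T) \<in> M" for S T
    unfolding word_factors conj_act_prod_list[OF s_unit[OF i]]
    by (rule prod_list_closed)
      (auto elim: factors_cases simp: one one_in conj_generator_in[OF i])
  have neg: "conj_act (s i) (- y) = - conj_act (s i) y" for y by (simp add: conj_act_def)
  obtain S T where "m = word n u v S T \<or> m = - word n u v S T"
    using m unfolding signed_words_iff by blast
  then show ?thesis using words[of S T] by (auto simp: neg)
qed

lemma conj_s_permutes: 
  assumes i: "i \<in> idx"
  shows "conj_act (s i) ` M = M"
proof (rule endo_inj_surj[OF finite_signed_words])
  show "conj_act (s i) ` M \<subseteq> M" using conj_s_into[OF i] by blast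
  show "inj_on (conj_act (s i)) M"
    by (rule inj_on_inverseI[of _ "conj_act (ring_inv (s i))"])
      (rule conj_act_inv_cancel[OF s_unit[OF i]])
qed

lemma conj_inv_s_into:
  assumes i: "i \<in> idx" and y: "y \<in> M"
  shows "conj_act (ring_inv (s i)) y \<in> M"
proof -
  obtain m where "m \<in> M" "y = conj_act (s i) m" using y conj_s_permutes[OF i] by blast
  then show ?thesis using conj_act_inv_cancel[OF s_unit[OF i]] by simp
qed

lemma Ggrp_conj_into:
  assumes "g \<in> Ggrp n s"
  shows "ring_unit g \<and> conj_act g ` M \<subseteq> M"
  using assms
proof (induction rule: Ggrp.induct)
  case one
  have "ring_inv (1::'a) = 1" by (rule ring_inv_eqI) simp_all
  then show ?case by (auto simp: ring_unit_one conj_act_def)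
next
  case (mul g i)
  then show ?case
    using ring_unit_mult[OF _ s_unit] conj_act_mult[OF _ s_unit] conj_s_into by auto
next
  case (mulinv g i)
  note inv_unit = ring_unit_inv(1)[OF s_unit[OF mulinv(2)]]
  then show ?case
    using mulinv ring_unit_mult[OF _ inv_unit] conj_act_mult[OF _ inv_unit] conj_inv_s_into
    by auto
qed

(* Conjugation is C-linear, so when the words span the algebra it is determined by its
   values on the signed words. *)
lemma conj_act_eq_on_words:
  assumes span: "\<forall>x. \<exists>c. x = (\<Sum>(S, T)\<in>word_idx n. sc (c (S, T)) * word n u v S T)"
    and agree: "\<forall>m\<in>M. conj_act g m = conj_act h m"
  shows "conj_act g = conj_act h"
proof
  fix x
  obtain c where x: "x = (\<Sum>(S, T)\<in>word_idx n. sc (c (S, T)) * word n u v S T)"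
    using span by blast
  have scalar: "conj_act f (sc a * w) = sc a * conj_act f w" for f a w
    unfolding conj_act_def by (simp only: mult.assoc sc_pull)
  have "conj_act g (sc (c p) * word n u v (fst p) (snd p))
      = conj_act h (sc (c p) * word n u v (fst p) (snd p))" if "p \<in> word_idx n" for p
    using that agree word_in by (auto simp: scalar word_idx_def)
  then show "conj_act g x = conj_act h x"
    unfolding x conj_act_sum by (auto intro: sum.cong simp: case_prod_beta)
qed

(* The conjugation image of G_n embeds into the finite set of maps M -> M. *)
lemma finite_conj_image:
  assumes span: "\<forall>x. \<exists>c. x = (\<Sum>(S, T)\<in>word_idx n. sc (c (S, T)) * word n u v S T)"
  shows "finite (conj_act ` Ggrp n s)"
proof -
  let ?F = "conj_act ` Ggrp n s"
  have "inj_on (\<lambda>f. restrict f M) ?F"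
  proof (rule inj_onI)
    fix f h assume "f \<in> ?F" "h \<in> ?F" and eq: "restrict f M = restrict h M"
    have "\<forall>m\<in>M. f m = h m" using fun_cong[OF eq] by (metis restrict_apply')
    with \<open>f \<in> ?F\<close> \<open>h \<in> ?F\<close> show "f = h" using conj_act_eq_on_words[OF span] by blast
  qed
  moreover have "(\<lambda>f. restrict f M) ` ?F \<subseteq> M \<rightarrow>\<^sub>E M"
    using Ggrp_conj_into by fastforce
  moreover have "finite (M \<rightarrow>\<^sub>E M)" by (simp add: finite_PiE finite_signed_words)
  ultimately show ?thesis by (meson finite_imageD finite_subset)
qed

end

theorem mainTheorem7:
  fixes n :: nat and sc :: "complex \<Rightarrow> 'a::ring_1" and u v :: "nat \<Rightarrow> 'a"
  assumes "n \<ge> 2" and "is_Q n sc u v"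
  shows "(\<forall>i\<in>{1..<n}. conj_act (sgen sc u v i) ` signed_words n u v = signed_words n u v)
     \<and> finite (conj_act ` Ggrp n (sgen sc u v))
     \<and> {g \<in> Ggrp n (sgen sc u v). conj_act g = id} \<subseteq> {z. \<forall>x. z * x = x * z}"
proof -
  interpret Q_algebra n sc u v
    using assms(2) unfolding is_Q_def by unfold_locales auto
  have span: "\<forall>x. \<exists>c. x = (\<Sum>(S, T)\<in>word_idx n. sc (c (S, T)) * word n u v S T)"
    using assms(2) unfolding is_Q_def words_basis_def by blast
  have kernel: "g * x = x * g" if "g \<in> Ggrp n (sgen sc u v)" "conj_act g = id" for g x
    using conj_act_kernel_central Ggrp_conj_into that by blast
  show ?thesis using conj_s_permutes finite_conj_image[OF span] kernel by blast
qed

end
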